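(* Let $(X,Y,E)$ be a bipartite graph in which every vertex has degree at most $d_{max}$. For non-negative integers $k\le|X|$ and $l\le|Y|$ let $s=\frac{kl|E|}{|X||Y|}$. Then for every real $0\le\gamma<1/2$, $$\Pr_{S\sim\binom{X}{k},\,T\sim\binom{Y}{l}}\big[|E(S,T)|\notin[(1-\gamma)s,(1+\gamma)s]\big]\le4\exp\left(-\frac{\gamma^2s}{54d_{max}}\right).$$
   Context: $S$ and $T$ are sampled independently and uniformly among subsets of $X$ of size $k$ and subsets of $Y$ of size $l$, respectively. $E(S,T)$ denotes the set of edges with one endpoint in $S$ and the other in $T$. *)

theory Defs
  imports "HOL-Probability.Probability"
begin

definition edges_between :: "('a \<times> 'b) set \<Rightarrow> 'a set \<Rightarrow> 'b set \<Rightarrow> ('a \<times> 'b) set" where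
  "edges_between E S T = E \<inter> (S \<times> T)"

definition uniform_subset :: "'a set \<Rightarrow> nat \<Rightarrow> 'a set pmf" where
  "uniform_subset A k = pmf_of_set {S. S \<subseteq> A \<and> card S = k}"

end

theory Submission
  imports Defs
begin

text \<open>The edge count is exposed in two stages. For a fixed set T', the count
  |E(S,T')| is the sum of the degrees into T' over a uniform k-subset S, with weights in
  [0, dmax]. By Maclaurin's inequality its moment generating function is at most that of k draws
  with replacement, which yields the Chernoff bound 2 exp(-\<delta>^2\<mu>/(4 dmax)) for a relative
  deviation \<delta> from the mean \<mu>. This is applied first to S with T' = Y, where \<mu> = k|E|/|X| \<ge> s,
  and then, for every S whose count is within 1 \<plusminus> \<delta> of its mean, to T with the sides
  exchanged, where the mean is within 1 \<plusminus> \<delta> of s. With \<delta> = \<gamma>/3 the two errors compose to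
  1 \<plusminus> \<gamma>, both means are at least 2s/3, so both exponents are at least \<gamma>^2s/(54 dmax), and a
  union bound over the two stages gives the factor 4.\<close>

definition k_subsets :: "'a set \<Rightarrow> nat \<Rightarrow> 'a set set" where
  "k_subsets A k = {S. S \<subseteq> A \<and> card S = k}"

lemma finite_k_subsets [simp]: "finite A \<Longrightarrow> finite (k_subsets A k)"
  by (simp add: k_subsets_def)

lemma card_k_subsets: "finite A \<Longrightarrow> card (k_subsets A k) = card A choose k"
  unfolding k_subsets_def by (rule n_subsets)

lemma k_subsets_nonempty: "finite A \<Longrightarrow> k \<le> card A \<Longrightarrow> k_subsets A k \<noteq> {}"
  using card_k_subsets[of A k] by (auto simp: zero_less_binomial_iff)

lemma k_subsets_zero: "finite A \<Longrightarrow> k_subsets A 0 = {{}}"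
  by (auto simp: k_subsets_def dest: finite_subset)

lemma k_subsets_insert_Suc:
  assumes "finite B" "x \<notin> B"
  shows "k_subsets (insert x B) (Suc k) = k_subsets B (Suc k) \<union> insert x ` k_subsets B k"
proof (intro equalityI subsetI)
  fix S assume S: "S \<in> k_subsets (insert x B) (Suc k)"
  then have "finite S" using assms finite_subset by (auto simp: k_subsets_def)
  with S show "S \<in> k_subsets B (Suc k) \<union> insert x ` k_subsets B k"
    by (cases "x \<in> S") (auto simp: k_subsets_def image_iff intro!: exI[of _ "S - {x}"])
next
  fix S assume "S \<in> k_subsets B (Suc k) \<union> insert x ` k_subsets B k"
  then show "S \<in> k_subsets (insert x B) (Suc k)"
    using assms by (auto simp: k_subsets_def) (metis card_insert_disjoint finite_subset subsetD)
qed

lemma sum_prod_k_subsets_insert_Suc: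
  fixes a :: "'a \<Rightarrow> real"
  assumes "finite B" "x \<notin> B"
  shows "(\<Sum>S\<in>k_subsets (insert x B) (Suc k). \<Prod>i\<in>S. a i) =
    (\<Sum>S\<in>k_subsets B (Suc k). \<Prod>i\<in>S. a i) + a x * (\<Sum>S\<in>k_subsets B k. \<Prod>i\<in>S. a i)"
proof -
  have disjoint: "k_subsets B (Suc k) \<inter> insert x ` k_subsets B k = {}"
    using assms by (auto simp: k_subsets_def)
  have inj: "inj_on (insert x) (k_subsets B k)"
    using assms by (auto simp: inj_on_def k_subsets_def)
  have "(\<Sum>S\<in>k_subsets (insert x B) (Suc k). \<Prod>i\<in>S. a i)
      = (\<Sum>S\<in>k_subsets B (Suc k). \<Prod>i\<in>S. a i) + (\<Sum>S\<in>insert x ` k_subsets B k. \<Prod>i\<in>S. a i)"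
    using assms disjoint by (simp add: k_subsets_insert_Suc sum.union_disjoint)
  also have "(\<Sum>S\<in>insert x ` k_subsets B k. \<Prod>i\<in>S. a i) = (\<Sum>S\<in>k_subsets B k. \<Prod>i\<in>insert x S. a i)"
    by (simp add: sum.reindex[OF inj])
  also have "\<dots> = a x * (\<Sum>S\<in>k_subsets B k. \<Prod>i\<in>S. a i)"
    using assms unfolding sum_distrib_left
    by (intro sum.cong refl) (auto simp: k_subsets_def intro!: prod.insert intro: finite_subset)
  finally show ?thesis .
qed

lemma power_Suc_tangent_le:
  fixes y m :: real
  assumes "0 \<le> y" "0 \<le> m"
  shows "m ^ Suc k + real (Suc k) * m ^ k * (y - m) \<le> y ^ Suc k"
proof (induction k)
  case (Suc k)
  have "y * (m ^ Suc k + real (Suc k) * m ^ k * (y - m)) \<le> y * y ^ Suc k"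
    using Suc assms by (intro mult_left_mono) auto
  moreover have "m ^ Suc (Suc k) + real (Suc (Suc k)) * m ^ Suc k * (y - m)
      = y * (m ^ Suc k + real (Suc k) * m ^ k * (y - m)) - real (Suc k) * m ^ k * (y - m)^2"
    by (simp add: algebra_simps power2_eq_square)
  moreover have "0 \<le> real (Suc k) * m ^ k * (y - m)^2" using assms by simp
  ultimately show ?case by simp
qed simp

lemma binomial_mean_power_step:
  fixes m j :: nat and a b :: real
  shows "real (m choose Suc j) * b ^ Suc j + a * (real (m choose j) * b ^ j)
    = real (Suc m choose Suc j) * (b ^ Suc j + real (Suc j) * b ^ j * ((a + real m * b) / real (Suc m) - b))"
proof -
  define p q c where "p = real (m choose j)" and "q = real (m choose Suc j)"
    and "c = real (Suc m choose Suc j)"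
  have pascal: "c = p + q" unfolding p_def q_def c_def by simp
  have "real (Suc m) * p = c * real (Suc j)"
    unfolding p_def c_def by (metis Suc_times_binomial_eq of_nat_mult)
  then have absorb: "c * real (Suc j) / real (Suc m) = p"
    by (simp add: field_simps del: of_nat_Suc)
  have "c * (b ^ Suc j + real (Suc j) * b ^ j * ((a + real m * b) / real (Suc m) - b))
      = c * b ^ Suc j + c * real (Suc j) / real (Suc m) * b ^ j * (a - b)"
    by (simp add: field_simps del: of_nat_Suc) (simp add: algebra_simps)
  also have "\<dots> = q * b ^ Suc j + a * (p * b ^ j)"
    unfolding absorb by (simp add: pascal algebra_simps)
  finally show ?thesis unfolding p_def q_def c_def by simp
qed

lemma sum_prod_k_subsets_le:
  fixes a :: "'a \<Rightarrow> real"
  assumes "finite A" "\<forall>i\<in>A. 0 \<le> a i" "k \<le> card A"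
  shows "(\<Sum>S\<in>k_subsets A k. \<Prod>i\<in>S. a i) \<le> real (card A choose k) * (sum a A / real (card A)) ^ k"
  using assms
proof (induction A arbitrary: k rule: finite_induct)
  case empty
  then show ?case by (simp add: k_subsets_zero)
next
  case (insert x B)
  define m b where "m = card B" and "b = sum a B / real m"
  have b_nonneg: "0 \<le> b" and ax_nonneg: "0 \<le> a x"
    using insert by (auto simp: b_def sum_nonneg)
  have mean: "sum a (insert x B) / real (card (insert x B)) = (a x + real m * b) / real (Suc m)"
    using insert by (cases "m = 0") (auto simp: m_def b_def)
  show ?case
  proof (cases k)
    case 0
    then show ?thesis using insert by (simp add: k_subsets_zero)
  next
    case (Suc j)
    have IH: "(\<Sum>S\<in>k_subsets B i. \<Prod>i\<in>S. a i) \<le> real (m choose i) * b ^ i" for i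
    proof (cases "i \<le> m")
      case False
      then have "k_subsets B i = {}" using insert(1) by (auto simp: k_subsets_def m_def dest: card_mono)
      then show ?thesis using b_nonneg by simp
    qed (use insert in \<open>auto simp: m_def b_def\<close>)
    have "(\<Sum>S\<in>k_subsets (insert x B) k. \<Prod>i\<in>S. a i) \<le> real (m choose Suc j) * b ^ Suc j + a x * (real (m choose j) * b ^ j)"
      unfolding Suc sum_prod_k_subsets_insert_Suc[OF insert(1,2)]
      using IH[of "Suc j"] IH[of j] ax_nonneg by (intro add_mono mult_left_mono) auto
    also have "\<dots> \<le> real (Suc m choose Suc j) * ((a x + real m * b) / real (Suc m)) ^ Suc j"
      unfolding binomial_mean_power_step using insert b_nonneg
      by (intro mult_left_mono power_Suc_tangent_le) auto
    finally show ?thesis unfolding mean using insert by (simp add: Suc m_def)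
  qed
qed

lemma exp_le_one_plus_sq:
  fixes u :: real
  assumes "\<bar>u\<bar> \<le> 1"
  shows "exp u \<le> 1 + u + u\<^sup>2"
proof (cases "0 \<le> u")
  case True
  then show ?thesis using exp_bound[of u] assms by simp
next
  case False
  define v where "v = - u"
  have v: "0 \<le> v" using False by (simp add: v_def)
  have pos: "0 < 1 + v + v\<^sup>2 / 2" using v by (simp add: add_pos_nonneg)
  have "exp u = 1 / exp v" by (simp add: v_def exp_minus field_simps)
  also have "\<dots> \<le> 1 / (1 + v + v\<^sup>2 / 2)"
    using exp_lower_Taylor_quadratic[OF v] pos by (intro divide_left_mono) auto
  also have "\<dots> \<le> 1 - v + v\<^sup>2"
  proof -
    have "(1 - v + v\<^sup>2) * (1 + v + v\<^sup>2 / 2) = 1 + v\<^sup>2 / 2 + v ^ 3 / 2 + v ^ 4 / 2"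
      by (simp add: field_simps power2_eq_square power3_eq_cube power4_eq_xxxx)
    then have "1 \<le> (1 - v + v\<^sup>2) * (1 + v + v\<^sup>2 / 2)" using v by simp
    then show ?thesis using pos by (simp add: divide_le_eq)
  qed
  finally show ?thesis by (simp add: v_def)
qed

lemma exp_mult_le_chord:
  fixes t w d :: real
  assumes "0 < d" "0 \<le> w" "w \<le> d"
  shows "exp (t * w) \<le> 1 + w / d * (exp (t * d) - 1)"
proof -
  have "exp ((1 - w / d) *\<^sub>R 0 + (w / d) *\<^sub>R (t * d)) \<le> (1 - w / d) * exp 0 + (w / d) * exp (t * d)"
    using assms by (intro convex_onD[OF exp_convex]) auto
  then show ?thesis using assms by (simp add: algebra_simps)
qed

lemma card_le_sum_exp:
  fixes f :: "'a \<Rightarrow> real"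
  assumes "finite F"
  shows "real (card {x\<in>F. a \<le> f x}) \<le> (\<Sum>x\<in>F. exp (f x - a))"
proof -
  have "real (card {x\<in>F. a \<le> f x}) = (\<Sum>x\<in>{x\<in>F. a \<le> f x}. 1)" by simp
  also have "\<dots> \<le> (\<Sum>x\<in>{x\<in>F. a \<le> f x}. exp (f x - a))"
    by (intro sum_mono) simp
  also have "\<dots> \<le> (\<Sum>x\<in>F. exp (f x - a))"
    using assms by (intro sum_mono2) auto
  finally show ?thesis .
qed

lemma sum_exp_k_subsets_le:
  fixes w :: "'a \<Rightarrow> real"
  assumes A: "finite A" and w: "\<forall>i\<in>A. 0 \<le> w i \<and> w i \<le> d" and d: "0 < d"
    and k: "k \<le> card A" and u: "\<bar>u\<bar> * d \<le> 1"
    and \<mu>: "\<mu> = real k * sum w A / real (card A)"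
  shows "(\<Sum>S\<in>k_subsets A k. exp (u * (sum w S - \<mu>))) \<le> real (card A choose k) * exp (u\<^sup>2 * d * \<mu>)"
proof -
  define a where "a i = exp (u * w i)" for i
  define m where "m = sum w A / real (card A)"
  have mean_le: "sum a A / real (card A) \<le> exp (m * (u + u\<^sup>2 * d))"
  proof (cases "A = {}")
    case False
    then have n: "0 < real (card A)" using A by (simp add: card_gt_0_iff)
    have "sum a A / real (card A) \<le> (\<Sum>i\<in>A. 1 + w i / d * (exp (u * d) - 1)) / real (card A)"
      using w d n unfolding a_def by (intro divide_right_mono sum_mono exp_mult_le_chord) auto
    also have "\<dots> = 1 + m / d * (exp (u * d) - 1)"
      using n by (simp add: m_def sum.distrib sum_divide_distrib[symmetric] sum_distrib_right field_simps)
    also have "\<dots> \<le> 1 + m / d * (u * d + (u * d)\<^sup>2)"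
      using exp_le_one_plus_sq[of "u * d"] u d w
      by (intro add_left_mono mult_left_mono) (auto simp: m_def abs_mult sum_nonneg)
    also have "\<dots> = 1 + m * (u + u\<^sup>2 * d)"
      using d by (simp add: field_simps power2_eq_square)
    also have "\<dots> \<le> exp (m * (u + u\<^sup>2 * d))" by (rule exp_ge_add_one_self)
    finally show ?thesis .
  qed simp
  have "(\<Sum>S\<in>k_subsets A k. exp (u * (sum w S - \<mu>))) = exp (- u * \<mu>) * (\<Sum>S\<in>k_subsets A k. \<Prod>i\<in>S. a i)"
    using A unfolding a_def k_subsets_def
    by (auto simp: sum_distrib_left exp_sum right_diff_distrib exp_diff exp_minus field_simps
        intro!: sum.cong dest: finite_subset)
  also have "\<dots> \<le> exp (- u * \<mu>) * (real (card A choose k) * (sum a A / real (card A)) ^ k)"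
    using sum_prod_k_subsets_le[OF A _ k, of a] by (simp add: a_def)
  also have "\<dots> \<le> exp (- u * \<mu>) * (real (card A choose k) * exp (m * (u + u\<^sup>2 * d)) ^ k)"
    using mean_le by (intro mult_left_mono power_mono) (auto simp: a_def sum_nonneg)
  also have "\<dots> = real (card A choose k) * exp (u\<^sup>2 * d * \<mu>)"
    by (simp add: \<mu> m_def exp_of_nat_mult[symmetric] exp_add[symmetric] field_simps add_divide_distrib)
  finally show ?thesis .
qed

lemma card_k_subsets_tail_le:
  fixes w :: "'a \<Rightarrow> real"
  assumes "finite A" "\<forall>i\<in>A. 0 \<le> w i \<and> w i \<le> d" "0 < d" "k \<le> card A" "\<bar>u\<bar> * d \<le> 1"
    and "\<mu> = real k * sum w A / real (card A)"
  shows "real (card {S\<in>k_subsets A k. a \<le> u * (sum w S - \<mu>)})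
    \<le> real (card A choose k) * exp (u\<^sup>2 * d * \<mu> - a)"
proof -
  have "real (card {S\<in>k_subsets A k. a \<le> u * (sum w S - \<mu>)})
      \<le> (\<Sum>S\<in>k_subsets A k. exp (u * (sum w S - \<mu>) - a))"
    using assms(1) by (intro card_le_sum_exp) simp
  also have "\<dots> = exp (- a) * (\<Sum>S\<in>k_subsets A k. exp (u * (sum w S - \<mu>)))"
    unfolding sum_distrib_left by (intro sum.cong refl) (simp add: mult_exp_exp)
  also have "\<dots> \<le> exp (- a) * (real (card A choose k) * exp (u\<^sup>2 * d * \<mu>))"
    using sum_exp_k_subsets_le[OF assms] by simp
  finally show ?thesis by (simp add: exp_diff exp_minus field_simps)
qed

lemma card_k_subsets_sum_deviation_le:
  fixes w :: "'a \<Rightarrow> real"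
  assumes A: "finite A" and w: "\<forall>i\<in>A. 0 \<le> w i \<and> w i \<le> d" and d: "0 < d"
    and k: "k \<le> card A" and \<delta>: "0 \<le> \<delta>" "\<delta> \<le> 2"
    and \<mu>: "\<mu> = real k * sum w A / real (card A)"
  shows "real (card {S\<in>k_subsets A k. sum w S \<notin> {(1 - \<delta>) * \<mu> .. (1 + \<delta>) * \<mu>}})
    \<le> 2 * real (card A choose k) * exp (- (\<delta>\<^sup>2 * \<mu> / (4 * d)))"
proof -
  define u where "u = \<delta> / (2 * d)"
  define a where "a = \<delta>\<^sup>2 * \<mu> / (2 * d)"
  define upper lower where "upper = {S\<in>k_subsets A k. a \<le> u * (sum w S - \<mu>)}"
    and "lower = {S\<in>k_subsets A k. a \<le> - u * (sum w S - \<mu>)}"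
  have u: "\<bar>u\<bar> * d \<le> 1" "\<bar>- u\<bar> * d \<le> 1" using d \<delta> by (simp_all add: u_def)
  have exponent: "u\<^sup>2 * d * \<mu> - a = - (\<delta>\<^sup>2 * \<mu> / (4 * d))"
    using d by (simp add: u_def a_def field_simps power2_eq_square)
  have "{S\<in>k_subsets A k. sum w S \<notin> {(1 - \<delta>) * \<mu> .. (1 + \<delta>) * \<mu>}} \<subseteq> upper \<union> lower"
  proof
    fix S assume S: "S \<in> {S\<in>k_subsets A k. sum w S \<notin> {(1 - \<delta>) * \<mu> .. (1 + \<delta>) * \<mu>}}"
    have a: "a = u * (\<delta> * \<mu>)" using d by (simp add: a_def u_def power2_eq_square)
    have "0 \<le> u" using d \<delta> by (simp add: u_def)
    consider "sum w S < (1 - \<delta>) * \<mu>" | "(1 + \<delta>) * \<mu> < sum w S" using S by auto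
    then show "S \<in> upper \<union> lower"
    proof cases
      case 1
      then have "u * sum w S \<le> u * ((1 - \<delta>) * \<mu>)" using \<open>0 \<le> u\<close> by (intro mult_left_mono) auto
      then show ?thesis using S by (simp add: lower_def a algebra_simps)
    next
      case 2
      then have "u * ((1 + \<delta>) * \<mu>) \<le> u * sum w S" using \<open>0 \<le> u\<close> by (intro mult_left_mono) auto
      then show ?thesis using S by (simp add: upper_def a algebra_simps)
    qed
  qed
  then have "card {S\<in>k_subsets A k. sum w S \<notin> {(1 - \<delta>) * \<mu> .. (1 + \<delta>) * \<mu>}} \<le> card (upper \<union> lower)"
    using A by (intro card_mono) (auto simp: upper_def lower_def)
  also have "\<dots> \<le> card upper + card lower" by (rule card_Un_le)
  finally have "real (card {S\<in>k_subsets A k. sum w S \<notin> {(1 - \<delta>) * \<mu> .. (1 + \<delta>) * \<mu>}})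
      \<le> real (card upper) + real (card lower)" by linarith
  also have "\<dots> \<le> 2 * real (card A choose k) * exp (- (\<delta>\<^sup>2 * \<mu> / (4 * d)))"
    using card_k_subsets_tail_le[OF A w d k u(1) \<mu>, of a] card_k_subsets_tail_le[OF A w d k u(2) \<mu>, of a]
    by (simp add: upper_def lower_def exponent)
  finally show ?thesis .
qed

lemma card_edges_between_eq_sum:
  assumes "finite S" "finite T"
  shows "card (edges_between E S T) = (\<Sum>x\<in>S. card {y\<in>T. (x, y) \<in> E})"
proof -
  have "edges_between E S T = (SIGMA x:S. {y\<in>T. (x, y) \<in> E})"
    by (auto simp: edges_between_def)
  then show ?thesis using assms by simp
qed

lemma card_edges_between_converse:
  "card (edges_between E S T) = card (edges_between (converse E) T S)"
proof -
  have "edges_between (converse E) T S = prod.swap ` edges_between E S T"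
    by (auto simp: edges_between_def)
  then show ?thesis by (simp add: card_image)
qed

lemma card_k_subsets_edges_deviation_le:
  fixes d \<delta> :: real
  assumes X: "finite X" and T: "finite T" and deg: "\<forall>x\<in>X. card {y\<in>T. (x, y) \<in> E} \<le> d"
    and d: "0 < d" and k: "k \<le> card X" and \<delta>: "0 \<le> \<delta>" "\<delta> \<le> 2"
    and \<mu>: "\<mu> = real k * real (card (edges_between E X T)) / real (card X)"
  shows "real (card {S\<in>k_subsets X k. real (card (edges_between E S T)) \<notin> {(1 - \<delta>) * \<mu> .. (1 + \<delta>) * \<mu>}})
    \<le> 2 * real (card X choose k) * exp (- (\<delta>\<^sup>2 * \<mu> / (4 * d)))"
proof -
  define w where "w x = real (card {y\<in>T. (x, y) \<in> E})" for x
  have sum_w: "real (card (edges_between E S T)) = sum w S" if "S \<subseteq> X" for S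
    using card_edges_between_eq_sum[of S T E] finite_subset[OF that X] T by (simp add: w_def)
  have "{S\<in>k_subsets X k. real (card (edges_between E S T)) \<notin> {(1 - \<delta>) * \<mu> .. (1 + \<delta>) * \<mu>}}
      = {S\<in>k_subsets X k. sum w S \<notin> {(1 - \<delta>) * \<mu> .. (1 + \<delta>) * \<mu>}}"
    by (auto simp: k_subsets_def sum_w)
  moreover have "\<forall>x\<in>X. 0 \<le> w x \<and> w x \<le> d" using deg by (simp add: w_def)
  ultimately show ?thesis
    using card_k_subsets_sum_deviation_le[OF X _ d k \<delta>] \<mu> sum_w[OF order_refl] by simp
qed

lemma approx_interval_trans:
  fixes \<delta> s \<mu> z :: real
  assumes "0 \<le> \<delta>" "\<delta> \<le> 1" "0 \<le> s"
    and \<mu>: "\<mu> \<in> {(1 - \<delta>) * s .. (1 + \<delta>) * s}" and z: "z \<in> {(1 - \<delta>) * \<mu> .. (1 + \<delta>) * \<mu>}"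
  shows "z \<in> {(1 - 3 * \<delta>) * s .. (1 + 3 * \<delta>) * s}"
proof -
  have "1 - 3 * \<delta> \<le> (1 - \<delta>) * (1 - \<delta>)" "(1 + \<delta>) * (1 + \<delta>) \<le> 1 + 3 * \<delta>"
    using assms mult_left_le[of \<delta> \<delta>] by (auto simp: algebra_simps)
  from this[THEN mult_right_mono, OF \<open>0 \<le> s\<close>]
  have factors: "(1 - 3 * \<delta>) * s \<le> (1 - \<delta>) * ((1 - \<delta>) * s)" "(1 + \<delta>) * ((1 + \<delta>) * s) \<le> (1 + 3 * \<delta>) * s"
    by (simp_all add: mult.assoc)
  have "(1 - \<delta>) * ((1 - \<delta>) * s) \<le> (1 - \<delta>) * \<mu>" using assms \<mu> by (intro mult_left_mono) auto
  then have lower: "(1 - 3 * \<delta>) * s \<le> z" using z factors by simp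
  have "(1 + \<delta>) * \<mu> \<le> (1 + \<delta>) * ((1 + \<delta>) * s)" using assms \<mu> by (intro mult_left_mono) auto
  then have "z \<le> (1 + 3 * \<delta>) * s" using z factors by simp
  then show ?thesis using lower by simp
qed

lemma card_pairs_le_two_stage:
  fixes p q :: real
  assumes SS: "finite SS" and TT: "finite TT" and G: "G \<subseteq> SS" and q: "0 \<le> q"
    and outside: "real (card (SS - G)) \<le> p * real (card SS)"
    and inside: "\<forall>S\<in>G. real (card {T\<in>TT. (S, T) \<in> B}) \<le> q * real (card TT)"
  shows "real (card (SS \<times> TT \<inter> B)) \<le> (p + q) * real (card SS) * real (card TT)"
proof -
  have finite_G: "finite G" using SS G finite_subset by blast
  have "SS \<times> TT \<inter> B \<subseteq> (SS - G) \<times> TT \<union> (SIGMA S:G. {T\<in>TT. (S, T) \<in> B})"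
    by auto
  then have "card (SS \<times> TT \<inter> B) \<le> card ((SS - G) \<times> TT \<union> (SIGMA S:G. {T\<in>TT. (S, T) \<in> B}))"
    using SS TT finite_G by (intro card_mono) auto
  also have "\<dots> \<le> card ((SS - G) \<times> TT) + card (SIGMA S:G. {T\<in>TT. (S, T) \<in> B})"
    by (rule card_Un_le)
  finally have "real (card (SS \<times> TT \<inter> B))
      \<le> real (card (SS - G)) * real (card TT) + (\<Sum>S\<in>G. real (card {T\<in>TT. (S, T) \<in> B}))"
    using finite_G TT by (simp add: card_cartesian_product flip: of_nat_mult of_nat_sum of_nat_add)
  also have "\<dots> \<le> p * real (card SS) * real (card TT) + real (card G) * (q * real (card TT))"
    using outside inside by (intro add_mono mult_right_mono) (auto intro: sum_bounded_above)
  also have "\<dots> \<le> p * real (card SS) * real (card TT) + real (card SS) * (q * real (card TT))"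
    using card_mono[OF SS G] q by (intro add_left_mono mult_right_mono) auto
  finally show ?thesis by (simp add: algebra_simps)
qed

lemma pair_pmf_of_set:
  assumes "finite A" "A \<noteq> {}" "finite B" "B \<noteq> {}"
  shows "pair_pmf (pmf_of_set A) (pmf_of_set B) = pmf_of_set (A \<times> B)"
proof (rule pmf_eqI)
  fix z :: "'a \<times> 'b"
  show "pmf (pair_pmf (pmf_of_set A) (pmf_of_set B)) z = pmf (pmf_of_set (A \<times> B)) z"
    using assms by (cases z) (simp add: pmf_pair indicator_def card_cartesian_product)
qed

lemma prob_pair_uniform_subset:
  assumes "finite X" "finite Y" "k \<le> card X" "l \<le> card Y"
  shows "measure_pmf.prob (pair_pmf (uniform_subset X k) (uniform_subset Y l)) B
    = real (card (k_subsets X k \<times> k_subsets Y l \<inter> B)) / (real (card X choose k) * real (card Y choose l))"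
  using assms k_subsets_nonempty[of X k] k_subsets_nonempty[of Y l]
  by (simp add: uniform_subset_def k_subsets_def[symmetric] pair_pmf_of_set measure_pmf_of_set
      card_cartesian_product card_k_subsets Int_commute)

lemma exp_deviation_bound_mono:
  fixes d s \<mu> \<delta> :: real
  assumes "0 < d" "2 * s \<le> 3 * \<mu>"
  shows "exp (- (\<delta>\<^sup>2 * \<mu> / (4 * d))) \<le> exp (- ((3 * \<delta>)\<^sup>2 * s / (54 * d)))"
proof -
  have "\<delta>\<^sup>2 * (2 * s) / (4 * d) \<le> \<delta>\<^sup>2 * (3 * \<mu>) / (4 * d)"
    using assms by (intro divide_right_mono mult_left_mono) auto
  then show ?thesis by (simp add: power_mult_distrib)
qed

lemma card_k_subsets_edges_deviation_given_mean:
  fixes d \<delta> s :: real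
  assumes Y: "finite Y" and S: "finite S" and deg: "\<forall>y\<in>Y. card {x\<in>S. (x, y) \<in> E} \<le> d"
    and d: "0 < d" and l: "l \<le> card Y" and \<delta>: "0 \<le> \<delta>" "\<delta> \<le> 1/3" and s: "0 \<le> s"
    and \<mu>: "real l * real (card (edges_between E S Y)) / real (card Y) \<in> {(1 - \<delta>) * s .. (1 + \<delta>) * s}"
  shows "real (card {T\<in>k_subsets Y l. real (card (edges_between E S T)) \<notin> {(1 - 3 * \<delta>) * s .. (1 + 3 * \<delta>) * s}})
    \<le> 2 * real (card Y choose l) * exp (- ((3 * \<delta>)\<^sup>2 * s / (54 * d)))"
proof -
  define \<mu> where "\<mu> = real l * real (card (edges_between E S Y)) / real (card Y)"
  have "{T\<in>k_subsets Y l. real (card (edges_between E S T)) \<notin> {(1 - 3 * \<delta>) * s .. (1 + 3 * \<delta>) * s}}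
      \<subseteq> {T\<in>k_subsets Y l. real (card (edges_between (converse E) T S)) \<notin> {(1 - \<delta>) * \<mu> .. (1 + \<delta>) * \<mu>}}"
    using approx_interval_trans[OF \<delta>(1) _ s \<mu>[folded \<mu>_def]] \<delta>
    by (auto simp flip: card_edges_between_converse)
  then have "real (card {T\<in>k_subsets Y l. real (card (edges_between E S T)) \<notin> {(1 - 3 * \<delta>) * s .. (1 + 3 * \<delta>) * s}})
      \<le> real (card {T\<in>k_subsets Y l. real (card (edges_between (converse E) T S)) \<notin> {(1 - \<delta>) * \<mu> .. (1 + \<delta>) * \<mu>}})"
    using Y by (intro of_nat_mono card_mono) auto
  also have "\<dots> \<le> 2 * real (card Y choose l) * exp (- (\<delta>\<^sup>2 * \<mu> / (4 * d)))"
    using card_k_subsets_edges_deviation_le[OF Y S _ d l \<delta>(1)] deg \<delta>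
    by (simp add: \<mu>_def card_edges_between_converse[of E S Y])
  also have "\<dots> \<le> 2 * real (card Y choose l) * exp (- ((3 * \<delta>)\<^sup>2 * s / (54 * d)))"
    using \<mu> \<delta> s d mult_right_mono[OF \<delta>(2) s] unfolding \<mu>_def[symmetric]
    by (intro mult_left_mono exp_deviation_bound_mono) (auto simp: algebra_simps)
  finally show ?thesis .
qed

lemma card_edges_between_deviation_pairs_le:
  fixes d \<gamma> s :: real
  assumes X: "finite X" and Y: "finite Y" and E: "E \<subseteq> X \<times> Y"
    and degX: "\<forall>x\<in>X. card {y. (x, y) \<in> E} \<le> d" and degY: "\<forall>y\<in>Y. card {x. (x, y) \<in> E} \<le> d"
    and d: "0 < d" and k: "k \<le> card X" and l: "l \<le> card Y" and \<gamma>: "0 \<le> \<gamma>" "\<gamma> \<le> 1"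
    and s: "s = real k * real l * real (card E) / (real (card X) * real (card Y))"
  shows "real (card (k_subsets X k \<times> k_subsets Y l \<inter>
      {(S, T). real (card (edges_between E S T)) \<notin> {(1 - \<gamma>) * s .. (1 + \<gamma>) * s}}))
    \<le> 4 * exp (- (\<gamma>\<^sup>2 * s / (54 * d))) * real (card X choose k) * real (card Y choose l)"
proof -
  define \<delta> \<epsilon> where "\<delta> = \<gamma> / 3" and "\<epsilon> = exp (- (\<gamma>\<^sup>2 * s / (54 * d)))"
  define \<mu> c where "\<mu> = real k * real (card E) / real (card X)" and "c = real l / real (card Y)"
  define SS TT where "SS = k_subsets X k" and "TT = k_subsets Y l"
  define Bad where "Bad = {(S, T). real (card (edges_between E S T)) \<notin> {(1 - \<gamma>) * s .. (1 + \<gamma>) * s}}"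
  define G where "G = {S\<in>SS. real (card (edges_between E S Y)) \<in> {(1 - \<delta>) * \<mu> .. (1 + \<delta>) * \<mu>}}"
  have \<gamma>_eq: "\<gamma> = 3 * \<delta>" and \<delta>: "0 \<le> \<delta>" "\<delta> \<le> 1/3" using \<gamma> by (auto simp: \<delta>_def)
  have s_eq: "s = c * \<mu>" by (simp add: s c_def \<mu>_def ac_simps)
  have c: "0 \<le> c" "c \<le> 1" using l by (auto simp: c_def divide_le_eq_1)
  have "0 \<le> \<mu>" by (simp add: \<mu>_def)
  then have \<mu>: "0 \<le> \<mu>" "0 \<le> s" "s \<le> \<mu>"
    unfolding s_eq using c by (simp_all add: mult_left_le_one_le)
  have "SS - G = {S\<in>SS. real (card (edges_between E S Y)) \<notin> {(1 - \<delta>) * \<mu> .. (1 + \<delta>) * \<mu>}}"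
    by (auto simp: G_def)
  moreover have "{y\<in>Y. (x, y) \<in> E} = {y. (x, y) \<in> E}" "edges_between E X Y = E" for x
    using E by (auto simp: edges_between_def)
  ultimately have "real (card (SS - G)) \<le> 2 * real (card SS) * exp (- (\<delta>\<^sup>2 * \<mu> / (4 * d)))"
    using card_k_subsets_edges_deviation_le[OF X Y _ d k \<delta>(1), where E=E and \<mu>=\<mu>] degX \<delta>
    by (simp add: SS_def \<mu>_def card_k_subsets X)
  also have "\<dots> \<le> 2 * real (card SS) * \<epsilon>"
    using exp_deviation_bound_mono[OF d, of s \<mu> \<delta>] \<mu> unfolding \<epsilon>_def \<gamma>_eq
    by (intro mult_left_mono) auto
  finally have outside: "real (card (SS - G)) \<le> 2 * \<epsilon> * real (card SS)"
    by (simp only: mult.assoc mult.commute[of \<epsilon>])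
  have "card {x\<in>S. (x, y) \<in> E} \<le> card {x. (x, y) \<in> E}" for S y
    using E X by (intro card_mono) (auto intro: finite_subset)
  then have deg: "\<forall>y\<in>Y. card {x\<in>S. (x, y) \<in> E} \<le> d" for S
    using degY by (meson of_nat_mono order_trans)
  have inside: "real (card {T\<in>TT. (S, T) \<in> Bad}) \<le> 2 * \<epsilon> * real (card TT)" if "S \<in> G" for S
  proof -
    have S: "finite S" using that X by (auto simp: G_def SS_def k_subsets_def intro: finite_subset)
    have "real (card (edges_between E S Y)) \<in> {(1 - \<delta>) * \<mu> .. (1 + \<delta>) * \<mu>}"
      using that by (simp add: G_def)
    then have "c * real (card (edges_between E S Y)) \<in> {(1 - \<delta>) * s .. (1 + \<delta>) * s}"
      using mult_left_mono[OF _ c(1)] by (auto simp: s_eq mult.left_commute)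
    from card_k_subsets_edges_deviation_given_mean[OF Y S deg d l \<delta> \<mu>(2)] this
    show ?thesis by (simp add: Bad_def TT_def \<epsilon>_def \<gamma>_eq card_k_subsets Y c_def ac_simps)
  qed
  have "real (card (SS \<times> TT \<inter> Bad)) \<le> (2 * \<epsilon> + 2 * \<epsilon>) * real (card SS) * real (card TT)"
    using outside inside by (intro card_pairs_le_two_stage) (auto simp: SS_def TT_def G_def X Y \<epsilon>_def)
  then show ?thesis by (simp add: SS_def TT_def Bad_def \<epsilon>_def card_k_subsets X Y)
qed

theorem lemma2p9:
  fixes X :: "'a set" and Y :: "'b set" and E :: "('a \<times> 'b) set"
    and dmax :: nat and k l :: nat and \<gamma> :: real
  assumes "finite X" and "finite Y" and "E \<subseteq> X \<times> Y"
    and "\<forall>x\<in>X. card {y. (x, y) \<in> E} \<le> dmax"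
    and "\<forall>y\<in>Y. card {x. (x, y) \<in> E} \<le> dmax"
    and "k \<le> card X" and "l \<le> card Y"
    and "0 \<le> \<gamma>" and "\<gamma> < 1/2"
  shows "let s = real k * real l * real (card E) / (real (card X) * real (card Y)) in
    measure_pmf.prob (pair_pmf (uniform_subset X k) (uniform_subset Y l))
      {(S, T). real (card (edges_between E S T)) \<notin> {(1 - \<gamma>) * s .. (1 + \<gamma>) * s}}
    \<le> 4 * exp (- (\<gamma>^2 * s / (54 * real dmax)))"
proof (cases "dmax = 0")
  case True
  \<comment> \<open>the bound is then 4, as division by zero yields 0\<close>
  then show ?thesis by (simp add: Let_def order_trans[OF measure_pmf.prob_le_1])
next
  case False
  have "0 < real (card X choose k) * real (card Y choose l)"
    using assms(6,7) by (simp add: zero_less_binomial_iff)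
  with False show ?thesis
    using card_edges_between_deviation_pairs_le[OF assms(1-3) _ _ _ assms(6-8), of "real dmax"] assms(4,5,9)
    by (simp add: Let_def prob_pair_uniform_subset assms(1,2,6,7) divide_le_eq)
qed

end
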